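(* Let $Q$ be a state of a medium, and let $G$ be the directed graph whose vertices are the states of the medium, with an arc from $S$ to $S'$ whenever $St=S'\neq S$ for some token $t$ belonging to the content $\hat Q$ of $Q$. Then $Q$ is the unique sink of $G$.
   Context: A medium consists of a finite set of states and a set of tokens, each token $t$ acting as a function on states, written $S\mapsto St$. Tokens concatenate into messages (words); $Sw$ denotes the state obtained by applying the tokens of $w$ successively to $S$. A token $t$ has a reverse $\tilde t$ if for any two distinct states $S\neq Q$, $St=Q$ iff $Q\tilde t=S$. A message is inconsistent if it contains some token together with its reverse, and consistent otherwise. A message $w$ is vacuous if for each token $t$ it contains equally many copies of $t$ and $\tilde t$. A token $t$ is effective for $S$ if $St\neq S$; a message is stepwise effective for $S$ if each successive token is effective for the state it is applied to. The axioms of a medium are: (1) each token has a unique reverse; (2) for any two distinct states $S,Q$ there is a consistent message $w$ with $Sw=Q$; (3) if $w$ is stepwise effective for $S$, then $Sw=S$ iff $w$ is vacuous; (4) if $Sw=Qz$, $w$ is stepwise effective for $S$, $z$ is stepwise effective for $Q$, and both $w,z$ are consistent, then $wz$ is consistent. A straight path from $S$ to $Sw$ is a consistent message $w$ that is stepwise effective for $S$. The content $\hat Q$ of a state $Q$ is the set of all tokens occurring in messages $w$ such that $Sw=Q$ is a straight path for some state $S$. (For every token $t$, exactly one of $t,\tilde t$ belongs to $\hat Q$, so $\hat Q$ and its complement form an orientation, the content orientation of $Q$.) *)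

theory Defs
  imports Main
begin

definition is_reverse :: "('s \<Rightarrow> 's) \<Rightarrow> ('s \<Rightarrow> 's) \<Rightarrow> bool" where
  "is_reverse t u \<longleftrightarrow> (\<forall>S Q. S \<noteq> Q \<longrightarrow> (t S = Q \<longleftrightarrow> u Q = S))"

definition apply_msg :: "'s \<Rightarrow> ('s \<Rightarrow> 's) list \<Rightarrow> 's" where
  "apply_msg S w = fold (\<lambda>t X. t X) w S"

definition consistent :: "('s \<Rightarrow> 's) set \<Rightarrow> ('s \<Rightarrow> 's) list \<Rightarrow> bool" where
  "consistent T w \<longleftrightarrow> \<not> (\<exists>t\<in>set w. \<exists>u\<in>set w. u \<in> T \<and> is_reverse t u)"

definition vacuous :: "('s \<Rightarrow> 's) set \<Rightarrow> ('s \<Rightarrow> 's) list \<Rightarrow> bool" where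
  "vacuous T w \<longleftrightarrow> (\<forall>t\<in>T. \<forall>u\<in>T. is_reverse t u \<longrightarrow> count_list w t = count_list w u)"

fun stepwise_effective :: "'s \<Rightarrow> ('s \<Rightarrow> 's) list \<Rightarrow> bool" where
  "stepwise_effective S [] = True"
| "stepwise_effective S (t # w) = (t S \<noteq> S \<and> stepwise_effective (t S) w)"

definition medium :: "('s::finite \<Rightarrow> 's) set \<Rightarrow> bool" where
  "medium T \<longleftrightarrow>
     (\<forall>t\<in>T. \<exists>!u. u \<in> T \<and> is_reverse t u)
   \<and> (\<forall>S Q. S \<noteq> Q \<longrightarrow> (\<exists>w\<in>lists T. consistent T w \<and> apply_msg S w = Q))
   \<and> (\<forall>S w. w \<in> lists T \<longrightarrow> stepwise_effective S w \<longrightarrow>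
          (apply_msg S w = S \<longleftrightarrow> vacuous T w))
   \<and> (\<forall>S Q w z. w \<in> lists T \<longrightarrow> z \<in> lists T \<longrightarrow> apply_msg S w = apply_msg Q z \<longrightarrow>
          stepwise_effective S w \<longrightarrow> stepwise_effective Q z \<longrightarrow>
          consistent T w \<longrightarrow> consistent T z \<longrightarrow> consistent T (w @ z))"

definition straight_path :: "('s \<Rightarrow> 's) set \<Rightarrow> 's \<Rightarrow> ('s \<Rightarrow> 's) list \<Rightarrow> bool" where
  "straight_path T S w \<longleftrightarrow> w \<in> lists T \<and> consistent T w \<and> stepwise_effective S w"

definition content :: "('s \<Rightarrow> 's) set \<Rightarrow> 's \<Rightarrow> ('s \<Rightarrow> 's) set" where
  "content T Q = {t. \<exists>S w. straight_path T S w \<and> apply_msg S w = Q \<and> t \<in> set w}"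

definition content_arc :: "('s \<Rightarrow> 's) set \<Rightarrow> 's \<Rightarrow> 's \<Rightarrow> 's \<Rightarrow> bool" where
  "content_arc T Q S S' \<longleftrightarrow> (\<exists>t\<in>content T Q. t S = S' \<and> S' \<noteq> S)"

definition is_sink :: "('v \<Rightarrow> 'v \<Rightarrow> bool) \<Rightarrow> 'v \<Rightarrow> bool" where
  "is_sink arc v \<longleftrightarrow> (\<forall>v'. \<not> arc v v')"

end

theory Submission
  imports Defs
begin

text \<open>If a token t of the content of Q moved Q to some V, then t, followed by the rest of a
  straight path through t ending in Q, and the single step from V back to Q by the reverse of t
  would be two straight paths to Q; axiom (4) would make their concatenation consistent, although
  it contains t together with its reverse. Conversely, a consistent message from S \<noteq> Q to Q
  (axiom (2)) stripped of its ineffective tokens is a straight path to Q, so its first token lies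
  in the content of Q and is effective at S.\<close>

lemma apply_msg_Nil [simp]: "apply_msg S [] = S"
  by (simp add: apply_msg_def)

lemma apply_msg_Cons [simp]: "apply_msg S (t # w) = apply_msg (t S) w"
  by (simp add: apply_msg_def)

lemma apply_msg_append [simp]: "apply_msg S (w @ z) = apply_msg (apply_msg S w) z"
  by (simp add: apply_msg_def)

lemma stepwise_effective_append:
  "stepwise_effective S (w @ z) \<longleftrightarrow> stepwise_effective S w \<and> stepwise_effective (apply_msg S w) z"
  by (induction w arbitrary: S) auto

lemma consistent_subset: "consistent T w \<Longrightarrow> set v \<subseteq> set w \<Longrightarrow> consistent T v"
  unfolding consistent_def by blast

lemma is_reverse_sym: "is_reverse t u \<Longrightarrow> is_reverse u t"
  unfolding is_reverse_def by metis

lemma is_reverse_undo: "is_reverse t u \<Longrightarrow> t S \<noteq> S \<Longrightarrow> u (t S) = S"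
  unfolding is_reverse_def by (drule spec[of _ S], drule spec[of _ "t S"]) auto

lemma exists_effective_submessage:
  "\<exists>w'. set w' \<subseteq> set w \<and> stepwise_effective S w' \<and> apply_msg S w' = apply_msg S w"
proof (induction w arbitrary: S)
  case Nil
  then show ?case by auto
next
  case (Cons t w)
  show ?case
  proof (cases "t S = S")
    case True
    with Cons.IH[of S] show ?thesis by auto
  next
    case False
    obtain w' where "set w' \<subseteq> set w" "stepwise_effective (t S) w'"
        "apply_msg (t S) w' = apply_msg (t S) w"
      using Cons.IH[of "t S"] by blast
    with False show ?thesis by (intro exI[of _ "t # w'"]) auto
  qed
qed

lemma straight_path_suffix: "straight_path T S (a @ b) \<Longrightarrow> straight_path T (apply_msg S a) b"
  unfolding straight_path_def
  by (auto simp: stepwise_effective_append intro: consistent_subset)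

lemma medium_reverse_ex1:
  assumes "medium T" "t \<in> T"
  shows "\<exists>!u. u \<in> T \<and> is_reverse t u"
proof -
  have "\<forall>t\<in>T. \<exists>!u. u \<in> T \<and> is_reverse t u"
    using assms(1) unfolding medium_def by (elim conjE)
  with assms(2) show ?thesis by blast
qed

lemma medium_reverse_unique:
  assumes "medium T" "t \<in> T" "u \<in> T" "u' \<in> T" "is_reverse t u" "is_reverse t u'"
  shows "u = u'"
  using medium_reverse_ex1[OF assms(1,2)] assms(3-) by (auto elim: ex1E)

lemma medium_consistent_reverse_singleton:
  assumes "medium T" "t \<in> T" "u \<in> T" "is_reverse t u" "consistent T [t]"
  shows "consistent T [u]"
proof -
  have "\<not> is_reverse u u"
  proof
    assume "is_reverse u u"
    then have "u = t"
      using medium_reverse_unique[OF assms(1,3,3,2)] is_reverse_sym[OF assms(4)] by simp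
    with assms(3-5) show False
      unfolding consistent_def by auto
  qed
  then show ?thesis
    unfolding consistent_def by simp
qed

lemma medium_consistent_message:
  assumes "medium T" "S \<noteq> Q"
  shows "\<exists>w\<in>lists T. consistent T w \<and> apply_msg S w = Q"
proof -
  have "\<forall>S Q. S \<noteq> Q \<longrightarrow> (\<exists>w\<in>lists T. consistent T w \<and> apply_msg S w = Q)"
    using assms(1) unfolding medium_def by (elim conjE)
  with assms(2) show ?thesis by blast
qed

lemma medium_consistent_append:
  assumes "medium T" "straight_path T S w" "straight_path T S' z" "apply_msg S w = apply_msg S' z"
  shows "consistent T (w @ z)"
proof -
  have "\<forall>S Q w z. w \<in> lists T \<longrightarrow> z \<in> lists T \<longrightarrow> apply_msg S w = apply_msg Q z \<longrightarrow>
          stepwise_effective S w \<longrightarrow> stepwise_effective Q z \<longrightarrow>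
          consistent T w \<longrightarrow> consistent T z \<longrightarrow> consistent T (w @ z)"
    using assms(1) unfolding medium_def by (elim conjE)
  with assms(2-) show ?thesis
    unfolding straight_path_def by blast
qed

lemma exists_straight_path:
  assumes "medium T" "S \<noteq> Q"
  shows "\<exists>w. straight_path T S w \<and> apply_msg S w = Q"
proof -
  obtain w where w: "w \<in> lists T" "consistent T w" "apply_msg S w = Q"
    using medium_consistent_message[OF assms] by blast
  obtain w' where w': "set w' \<subseteq> set w" "stepwise_effective S w'" "apply_msg S w' = apply_msg S w"
    using exists_effective_submessage[of w S] by blast
  have "straight_path T S w'"
    unfolding straight_path_def
  proof (intro conjI)
    show "w' \<in> lists T" using w(1) w'(1) by (simp add: lists_eq_set subset_trans)
    show "consistent T w'" using consistent_subset[OF w(2) w'(1)] .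
  qed (rule w'(2))
  moreover have "apply_msg S w' = Q" using w(3) w'(3) by simp
  ultimately show ?thesis by blast
qed

lemma content_token_fixes_state:
  assumes med: "medium T" and "t \<in> content T Q"
  shows "t Q = Q"
proof (rule ccontr)
  assume "t Q \<noteq> Q"
  obtain S w where path: "straight_path T S w" "apply_msg S w = Q" "t \<in> set w"
    using \<open>t \<in> content T Q\<close> unfolding content_def by blast
  then obtain a b where w: "w = a @ t # b" by (meson split_list)
  have tail: "straight_path T (apply_msg S a) (t # b)"
    using straight_path_suffix[of T S a "t # b"] path(1) w by simp
  then have "t \<in> T" "consistent T (t # b)"
    unfolding straight_path_def by auto
  obtain u where "u \<in> T" "is_reverse t u"
    using medium_reverse_ex1[OF med \<open>t \<in> T\<close>] by blast
  have undo: "u (t Q) = Q"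
    using is_reverse_undo[OF \<open>is_reverse t u\<close> \<open>t Q \<noteq> Q\<close>] .
  have "consistent T [u]"
    using medium_consistent_reverse_singleton[OF med \<open>t \<in> T\<close> \<open>u \<in> T\<close> \<open>is_reverse t u\<close>]
      consistent_subset[OF \<open>consistent T (t # b)\<close>] by simp
  with \<open>u \<in> T\<close> undo \<open>t Q \<noteq> Q\<close> have "straight_path T (t Q) [u]"
    unfolding straight_path_def by simp
  moreover have "apply_msg (apply_msg S a) (t # b) = apply_msg (t Q) [u]"
    using path(2) w undo by simp
  ultimately have "consistent T ((t # b) @ [u])"
    using medium_consistent_append[OF med tail] by blast
  with \<open>is_reverse t u\<close> \<open>u \<in> T\<close> show False
    unfolding consistent_def by auto
qed

lemma content_arc_from_other_state:
  assumes "medium T" "S \<noteq> Q"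
  shows "\<exists>S'. content_arc T Q S S'"
proof -
  obtain w where path: "straight_path T S w" "apply_msg S w = Q"
    using exists_straight_path[OF assms] by blast
  with \<open>S \<noteq> Q\<close> obtain t v where w: "w = t # v"
    by (cases w) auto
  then have "t \<in> set w" by simp
  with path have "t \<in> content T Q"
    unfolding content_def by blast
  moreover have "t S \<noteq> S"
    using path(1) w unfolding straight_path_def by simp
  ultimately show ?thesis
    unfolding content_arc_def by blast
qed

theorem mainTheorem2:
  fixes T :: "('s::finite \<Rightarrow> 's) set" and Q :: 's
  assumes "medium T"
  shows "is_sink (content_arc T Q) Q \<and> (\<forall>S. is_sink (content_arc T Q) S \<longrightarrow> S = Q)"
proof
  show "is_sink (content_arc T Q) Q"
    using content_token_fixes_state[OF assms] unfolding is_sink_def content_arc_def by blast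
  show "\<forall>S. is_sink (content_arc T Q) S \<longrightarrow> S = Q"
    using content_arc_from_other_state[OF assms] unfolding is_sink_def by blast
qed

end
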